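(* Let $\lambda,\mu,\nu>0$ and equip $S^3$ with the generalised Lorentzian Berger metric $h$ described in the context, with $h$-orthonormal left-invariant frame $X,Y,Z$. Then $$K(X,Y)=h(R(X,Y)Y,X)=\frac{(\lambda^2+\mu^2-\nu^2)^2+4\nu^2(\mu^2-\nu^2)}{(\lambda\mu\nu)^2},$$ $$K(X,Z)=h(R(X,Z)Z,X)=\frac{(\lambda^2-\mu^2+\nu^2)^2-4\mu^2(\mu^2-\nu^2)}{(\lambda\mu\nu)^2},$$ $$K(Y,Z)=h(R(Y,Z)Z,Y)=\frac{(\lambda^2+\mu^2+\nu^2)^2+2(\lambda^4-\mu^4-\nu^4)}{(\lambda\mu\nu)^2}.$$
   Context: $S^3=\{(z,w)\in\mathbb C^2: |z|^2+|w|^2=1\}$ is a Lie group with multiplication $(z_1,w_1)\cdot(z_2,w_2)=(z_1z_2-\bar w_1w_2,\ \bar z_1w_2+w_1z_2)$ and inverse $(z,w)^{-1}=(\bar z,-w)$; the same formula defines $p\cdot v$ for $v\in\mathbb C^2$. Let $\langle (z_1,w_1),(z_2,w_2)\rangle=\mathrm{Re}(z_1\bar z_2+w_1\bar w_2)$. The Lorentzian metric is $h_p(A,B)=-\lambda^2\langle p^{-1}A,(i,0)\rangle\langle p^{-1}B,(i,0)\rangle+\mu^2\langle p^{-1}A,(0,-1)\rangle\langle p^{-1}B,(0,-1)\rangle+\nu^2\langle p^{-1}A,(0,i)\rangle\langle p^{-1}B,(0,i)\rangle+\langle p^{-1}A,(1,0)\rangle\langle p^{-1}B,(1,0)\rangle$.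 The frame is $X_p=\lambda^{-1}p\cdot(i,0)$, $Y_p=\mu^{-1}p\cdot(0,-1)$, $Z_p=\nu^{-1}p\cdot(0,i)$, with $h(X,X)=-1$, $h(Y,Y)=h(Z,Z)=1$. $R(A,B)C=\nabla_A\nabla_BC-\nabla_B\nabla_AC-\nabla_{[A,B]}C$ for the Levi-Civita connection $\nabla$ of $h$; the paper denotes the quantities $h(R(A,B)B,A)$ for frame vectors by $K(A,B)$. *)

theory Defs
  imports "HOL-Analysis.Analysis"
begin

type_synonym C2 = "complex \<times> complex"

definition qmul :: "C2 \<Rightarrow> C2 \<Rightarrow> C2" where
  "qmul p q = (fst p * fst q - cnj (snd p) * snd q, cnj (fst p) * snd q + snd p * fst q)"

definition qinv :: "C2 \<Rightarrow> C2" where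
  "qinv p = (cnj (fst p), - snd p)"

definition ip :: "C2 \<Rightarrow> C2 \<Rightarrow> real" where
  "ip a b = Re (fst a * cnj (fst b) + snd a * cnj (snd b))"

definition S3 :: "C2 set" where
  "S3 = {p. cmod (fst p) ^ 2 + cmod (snd p) ^ 2 = 1}"

definition hmet :: "real \<Rightarrow> real \<Rightarrow> real \<Rightarrow> C2 \<Rightarrow> C2 \<Rightarrow> C2 \<Rightarrow> real" where
  "hmet la m n p A B =
     - (la^2) * ip (qmul (qinv p) A) (\<i>, 0) * ip (qmul (qinv p) B) (\<i>, 0)
     + (m^2) * ip (qmul (qinv p) A) (0, -1) * ip (qmul (qinv p) B) (0, -1)
     + (n^2) * ip (qmul (qinv p) A) (0, \<i>) * ip (qmul (qinv p) B) (0, \<i>)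
     + ip (qmul (qinv p) A) (1, 0) * ip (qmul (qinv p) B) (1, 0)"

definition frameX :: "real \<Rightarrow> C2 \<Rightarrow> C2" where "frameX l p = (1 / l) *\<^sub>R qmul p (\<i>, 0)"
definition frameY :: "real \<Rightarrow> C2 \<Rightarrow> C2" where "frameY m p = (1 / m) *\<^sub>R qmul p (0, -1)"
definition frameZ :: "real \<Rightarrow> C2 \<Rightarrow> C2" where "frameZ n p = (1 / n) *\<^sub>R qmul p (0, \<i>)"

text \<open>C^infinity maps between normed spaces: all iterated directional (Frechet) derivatives exist.\<close>
definition smooth_map :: "('a::real_normed_vector \<Rightarrow> 'b::real_normed_vector) \<Rightarrow> bool" where
  "smooth_map f \<longleftrightarrow> (\<exists>F. f \<in> F \<and>
      (\<forall>g\<in>F. (\<forall>x. g differentiable (at x)) \<and>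
               (\<forall>v. (\<lambda>x. frechet_derivative g (at x) v) \<in> F)))"

definition dir :: "(C2 \<Rightarrow> C2) \<Rightarrow> (C2 \<Rightarrow> 'b::real_normed_vector) \<Rightarrow> C2 \<Rightarrow> 'b" where
  "dir A f p = frechet_derivative f (at p) (A p)"

text \<open>Smooth vector fields on S^3, represented by smooth maps C^2 -> C^2 tangent to S^3 along S^3.\<close>
definition tangent_field :: "(C2 \<Rightarrow> C2) \<Rightarrow> bool" where
  "tangent_field V \<longleftrightarrow> smooth_map V \<and> (\<forall>p\<in>S3. ip (V p) p = 0)"

definition bracket :: "(C2 \<Rightarrow> C2) \<Rightarrow> (C2 \<Rightarrow> C2) \<Rightarrow> C2 \<Rightarrow> C2" where
  "bracket A B p = dir A B p - dir B A p"

definition levi_civita :: "real \<Rightarrow> real \<Rightarrow> real \<Rightarrow>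
    ((C2 \<Rightarrow> C2) \<Rightarrow> (C2 \<Rightarrow> C2) \<Rightarrow> C2 \<Rightarrow> C2) \<Rightarrow> bool" where
  "levi_civita l m n nabla \<longleftrightarrow>
    (\<forall>A B. tangent_field A \<longrightarrow> tangent_field B \<longrightarrow> tangent_field (nabla A B)) \<and>
    (\<forall>A B C f. tangent_field A \<longrightarrow> tangent_field B \<longrightarrow> tangent_field C \<longrightarrow>
        smooth_map (f :: C2 \<Rightarrow> real) \<longrightarrow> (\<forall>p\<in>S3.
       nabla (\<lambda>q. A q + B q) C p = nabla A C p + nabla B C p \<and>
       nabla (\<lambda>q. f q *\<^sub>R A q) C p = f p *\<^sub>R nabla A C p \<and>
       nabla A (\<lambda>q. B q + C q) p = nabla A B p + nabla A C p \<and>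
       nabla A (\<lambda>q. f q *\<^sub>R B q) p = dir A f p *\<^sub>R B p + f p *\<^sub>R nabla A B p \<and>
       nabla A B p - nabla B A p = bracket A B p \<and>
       dir A (\<lambda>q. hmet l m n q (B q) (C q)) p =
          hmet l m n p (nabla A B p) (C p) + hmet l m n p (B p) (nabla A C p)))"

definition curv :: "((C2 \<Rightarrow> C2) \<Rightarrow> (C2 \<Rightarrow> C2) \<Rightarrow> C2 \<Rightarrow> C2) \<Rightarrow>
    (C2 \<Rightarrow> C2) \<Rightarrow> (C2 \<Rightarrow> C2) \<Rightarrow> (C2 \<Rightarrow> C2) \<Rightarrow> C2 \<Rightarrow> C2" where
  "curv nabla A B C p = nabla A (nabla B C) p - nabla B (nabla A C) p - nabla (bracket A B) C p"

end

theory Submission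
  imports Defs
begin

(* Left-invariant fields L_a q = q a with a in su2 have constant mutual h-products on S3,
   so their derivatives along tangent directions vanish and the Koszul formula reduces
   h(nabla_{L_a} L_b, L_c) to the algebraic expression
   (h_e([a,b],c) - h_e([b,c],a) + h_e([c,a],b)) / 2 at the identity e.
   Second covariant derivatives are reduced to first ones by metric compatibility,
   h(nabla_{L_a} nabla_{L_b} L_c, L_d) = - h(nabla_{L_b} L_c, nabla_{L_a} L_d), followed by
   expansion in the h-orthonormal frame.  The curvatures of the frame X, Y, Z are thus
   polynomials in the structure constants [X,Y] = 2 nu/(lambda mu) Z,
   [Y,Z] = 2 lambda/(mu nu) X, [Z,X] = 2 mu/(lambda nu) Y and the signature (-,+,+). *)

definition left_field :: "C2 \<Rightarrow> C2 \<Rightarrow> C2" where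
  "left_field v q = qmul q v"

definition lie_bracket :: "C2 \<Rightarrow> C2 \<Rightarrow> C2" where
  "lie_bracket a b = qmul a b - qmul b a"

definition su2 :: "C2 set" where
  "su2 = {a. Re (fst a) = 0}"

lemma qmul_assoc: "qmul (qmul p q) r = qmul p (qmul q r)"
  by (simp add: qmul_def algebra_simps)

lemma qmul_add_left: "qmul (p + q) v = qmul p v + qmul q v"
  by (simp add: qmul_def algebra_simps)

lemma qmul_scaleR_left: "qmul (r *\<^sub>R p) v = r *\<^sub>R qmul p v"
  by (simp add: qmul_def algebra_simps scaleR_conv_of_real)

lemma qmul_diff_right: "qmul q (a - b) = qmul q a - qmul q b"
  by (simp add: qmul_def algebra_simps)

lemma qmul_scaleR_right: "qmul q (r *\<^sub>R a) = r *\<^sub>R qmul q a"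
  by (simp add: qmul_def algebra_simps scaleR_conv_of_real)

lemma qmul_one_left [simp]: "qmul (1, 0) v = v"
  by (simp add: qmul_def)

lemma qinv_one [simp]: "qinv (1, 0) = (1, 0)"
  by (simp add: qinv_def)

lemma S3_eq_sphere: "S3 = sphere 0 1"
  by (auto simp: S3_def norm_Pair)

lemma qmul_qinv_cancel_left:
  assumes "p \<in> S3"
  shows "qmul (qinv p) (qmul p v) = v"
proof -
  obtain p1 p2 where p: "p = (p1, p2)" by fastforce
  have "cnj p1 * p1 + cnj p2 * p2 = 1"
    using assms by (simp add: S3_def p complex_eq_iff cmod_power2) (simp add: power2_eq_square)
  then show ?thesis
    by (cases v) (simp add: qmul_def qinv_def p algebra_simps flip: distrib_left distrib_right)
qed

lemma ip_eq_inner: "ip a b = inner a b"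
  by (simp add: ip_def inner_prod_def inner_complex_def)

lemma Re_fst_qmul_qinv: "Re (fst (qmul (qinv p) u)) = ip u p"
  by (simp add: qmul_def qinv_def ip_def algebra_simps)

lemma lie_bracket_in_su2: "lie_bracket a b \<in> su2"
  by (simp add: su2_def lie_bracket_def qmul_def)

lemma lie_bracket_scaleR_left: "lie_bracket (r *\<^sub>R a) b = r *\<^sub>R lie_bracket a b"
  by (simp add: lie_bracket_def qmul_scaleR_left qmul_scaleR_right scaleR_right_diff_distrib)

lemma lie_bracket_scaleR_right: "lie_bracket a (r *\<^sub>R b) = r *\<^sub>R lie_bracket a b"
  by (simp add: lie_bracket_def qmul_scaleR_left qmul_scaleR_right scaleR_right_diff_distrib)

lemma lie_bracket_minus_left: "lie_bracket (- a) b = - lie_bracket a b"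
  by (simp add: lie_bracket_def qmul_def)

lemma lie_bracket_minus_right: "lie_bracket a (- b) = - lie_bracket a b"
  by (simp add: lie_bracket_def qmul_def)

lemma lie_bracket_self: "lie_bracket a a = 0"
  by (simp add: lie_bracket_def)

lemma ip_left_field: "ip (left_field v q) q = ip q q * Re (fst v)"
  by (cases q, cases v) (simp add: left_field_def qmul_def ip_def algebra_simps)

lemma bounded_linear_left_field: "bounded_linear (left_field v)"
  by (rule bounded_linearI') (simp_all add: left_field_def qmul_add_left qmul_scaleR_left)

lemma frechet_derivative_left_field: "frechet_derivative (left_field v) (at x) = left_field v"
  by (simp add: bounded_linear_left_field bounded_linear_imp_has_derivative
      frechet_derivative_at[symmetric])

lemma smooth_map_const: "smooth_map (\<lambda>x. c)"
  unfolding smooth_map_def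
  by (rule exI[of _ "range (\<lambda>c x. c)"]) (auto simp: frechet_derivative_const)

lemma smooth_map_left_field: "smooth_map (left_field v)"
  unfolding smooth_map_def
  by (rule exI[of _ "insert (left_field v) (range (\<lambda>c x. c))"])
    (auto simp: frechet_derivative_left_field bounded_linear_imp_differentiable
      bounded_linear_left_field simp del: split_paired_All)

lemma tangent_field_left_field: "a \<in> su2 \<Longrightarrow> tangent_field (left_field a)"
  by (simp add: tangent_field_def smooth_map_left_field ip_left_field su2_def)

lemma bracket_left_field: "bracket (left_field a) (left_field b) = left_field (lie_bracket a b)"
  by (simp add: fun_eq_iff bracket_def dir_def frechet_derivative_left_field)
    (simp add: left_field_def lie_bracket_def qmul_assoc qmul_diff_right)

lemma differentiable_bounded_linear_compose:
  "bounded_linear f \<Longrightarrow> g differentiable F \<Longrightarrow> (\<lambda>x. f (g x)) differentiable F"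
  unfolding differentiable_def by (blast intro: bounded_linear.has_derivative)

lemma hmet_differentiable:
  assumes "U differentiable (at p)" and "V differentiable (at p)"
  shows "(\<lambda>q. hmet l m n q (U q) (V q)) differentiable (at p)"
  unfolding hmet_def qmul_def qinv_def ip_def
  by (intro derivative_intros assms differentiable_ident
      differentiable_bounded_linear_compose[OF bounded_linear_fst]
      differentiable_bounded_linear_compose[OF bounded_linear_snd]
      differentiable_bounded_linear_compose[OF bounded_linear_Re]
      differentiable_bounded_linear_compose[OF bounded_linear_Im]
      differentiable_bounded_linear_compose[OF bounded_linear_cnj])

lemma frechet_derivative_sphere_tangent:
  fixes g :: "'a::real_inner \<Rightarrow> 'b::real_normed_vector"
  assumes g: "g differentiable (at p)" and p: "p \<in> sphere 0 1"
    and const: "\<And>q. q \<in> sphere 0 1 \<Longrightarrow> g q = c" and v: "inner v p = 0"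
  shows "frechet_derivative g (at p) v = 0"
proof (cases "v = 0")
  case True
  then show ?thesis
    using g frechet_derivative_works has_derivative_linear linear_0 by blast
next
  case False
  let ?D = "frechet_derivative g (at p)"
  have D: "(g has_derivative ?D) (at p)"
    using g frechet_derivative_works by blast
  define u where "u = v /\<^sub>R norm v"
  define \<gamma> where "\<gamma> t = cos t *\<^sub>R p + sin t *\<^sub>R u" for t :: real
  have "inner p p = 1" "inner u u = 1" "inner p u = 0"
    using p v False by (simp_all add: u_def dot_square_norm inner_commute)
  then have "inner (\<gamma> t) (\<gamma> t) = 1" for t
    by (simp add: \<gamma>_def inner_add_left inner_add_right inner_commute algebra_simps
        flip: power2_eq_square)
  then have "g \<circ> \<gamma> = (\<lambda>_. c)"
    using const by (simp add: fun_eq_iff norm_eq_1)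
  moreover have "(\<gamma> has_derivative (\<lambda>t. t *\<^sub>R u)) (at 0)" and "\<gamma> 0 = p"
    unfolding \<gamma>_def by (auto intro!: derivative_eq_intros)
  then have "(g \<circ> \<gamma> has_derivative ?D \<circ> (\<lambda>t. t *\<^sub>R u)) (at 0)"
    using D diff_chain_at by metis
  ultimately have "?D \<circ> (\<lambda>t. t *\<^sub>R u) = (\<lambda>_. 0)"
    using has_derivative_const has_derivative_unique by metis
  then have "?D u = 0"
    by (metis comp_apply scaleR_one)
  moreover have "linear ?D"
    using D has_derivative_linear by blast
  then have "?D v = norm v *\<^sub>R ?D u"
    using False by (metis u_def linear_scale norm_eq_zero scaleR_one divideR_right)
  ultimately show ?thesis
    by simp
qed

lemma hmet_sym: "hmet l m n p u w = hmet l m n p w u"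
  by (simp add: hmet_def algebra_simps)

lemma hmet_diff_left: "hmet l m n p (u - v) w = hmet l m n p u w - hmet l m n p v w"
  by (simp add: hmet_def qmul_diff_right ip_def algebra_simps)

lemma hmet_minus_left: "hmet l m n p (- u) w = - hmet l m n p u w"
  by (simp add: hmet_def qmul_def ip_def algebra_simps)

lemma hmet_minus_right: "hmet l m n p u (- w) = - hmet l m n p u w"
  by (simp add: hmet_sym[of l m n p u] hmet_minus_left)

lemma hmet_scaleR_left: "hmet l m n p (r *\<^sub>R u) w = r * hmet l m n p u w"
  by (simp add: hmet_def qmul_scaleR_right ip_def scaleR_conv_of_real algebra_simps)

lemma hmet_scaleR_right: "hmet l m n p u (r *\<^sub>R w) = r * hmet l m n p u w"
  by (simp add: hmet_sym[of l m n p u] hmet_scaleR_left)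

lemma hmet_zero_left: "hmet l m n p 0 w = 0"
  by (simp add: hmet_def qmul_def ip_def)

lemma hmet_at_identity:
  "hmet l m n p u w = hmet l m n (1, 0) (qmul (qinv p) u) (qmul (qinv p) w)"
  by (simp add: hmet_def)

lemma hmet_left_invariant:
  "p \<in> S3 \<Longrightarrow> hmet l m n p (qmul p x) (qmul p y) = hmet l m n (1, 0) x y"
  by (simp add: hmet_at_identity[of l m n p] qmul_qinv_cancel_left)

lemma hmet_left_field:
  "p \<in> S3 \<Longrightarrow> hmet l m n p u (left_field e p) = hmet l m n (1, 0) (qmul (qinv p) u) e"
  by (simp add: hmet_at_identity[of l m n p u] left_field_def qmul_qinv_cancel_left)

definition frameX_id :: "real \<Rightarrow> C2" where "frameX_id l = (Complex 0 (1 / l), 0)"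
definition frameY_id :: "real \<Rightarrow> C2" where "frameY_id m = (0, Complex (- 1 / m) 0)"
definition frameZ_id :: "real \<Rightarrow> C2" where "frameZ_id n = (0, Complex 0 (1 / n))"

lemma frame_id_in_su2: "frameX_id l \<in> su2" "frameY_id m \<in> su2" "frameZ_id n \<in> su2"
  by (simp_all add: su2_def frameX_id_def frameY_id_def frameZ_id_def)

lemma frame_eq_left_field:
  "frameX l = left_field (frameX_id l)"
  "frameY m = left_field (frameY_id m)"
  "frameZ n = left_field (frameZ_id n)"
  by (simp_all add: fun_eq_iff frameX_def frameY_def frameZ_def left_field_def qmul_def
      frameX_id_def frameY_id_def frameZ_id_def scaleR_conv_of_real complex_eq_iff)

lemma frame_id_orthonormal:
  assumes "l > 0" "m > 0" "n > 0"
  shows "hmet l m n (1, 0) (frameX_id l) (frameX_id l) = - 1"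
    and "hmet l m n (1, 0) (frameY_id m) (frameY_id m) = 1"
    and "hmet l m n (1, 0) (frameZ_id n) (frameZ_id n) = 1"
    and "hmet l m n (1, 0) (frameX_id l) (frameY_id m) = 0"
    and "hmet l m n (1, 0) (frameY_id m) (frameZ_id n) = 0"
    and "hmet l m n (1, 0) (frameZ_id n) (frameX_id l) = 0"
  using assms
  by (simp_all add: hmet_def qmul_def ip_def frameX_id_def frameY_id_def frameZ_id_def
      power2_eq_square)

lemma lie_bracket_frame_id:
  assumes "l \<noteq> 0" "m \<noteq> 0" "n \<noteq> 0"
  shows "lie_bracket (frameX_id l) (frameY_id m) = (2 * n / (l * m)) *\<^sub>R frameZ_id n"
    and "lie_bracket (frameY_id m) (frameZ_id n) = (2 * l / (m * n)) *\<^sub>R frameX_id l"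
    and "lie_bracket (frameZ_id n) (frameX_id l) = (2 * m / (l * n)) *\<^sub>R frameY_id m"
    and "lie_bracket (frameY_id m) (frameX_id l) = (- 2 * n / (l * m)) *\<^sub>R frameZ_id n"
    and "lie_bracket (frameZ_id n) (frameY_id m) = (- 2 * l / (m * n)) *\<^sub>R frameX_id l"
    and "lie_bracket (frameX_id l) (frameZ_id n) = (- 2 * m / (l * n)) *\<^sub>R frameY_id m"
  using assms
  by (simp_all add: lie_bracket_def qmul_def frameX_id_def frameY_id_def frameZ_id_def
      complex_eq_iff)

lemma hmet_frame_expansion:
  assumes p: "p \<in> S3" and u: "ip u p = 0" and "l > 0" "m > 0" "n > 0"
  shows "hmet l m n p u w =
     - hmet l m n p u (frameX l p) * hmet l m n p w (frameX l p)
     + hmet l m n p u (frameY m p) * hmet l m n p w (frameY m p)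
     + hmet l m n p u (frameZ n p) * hmet l m n p w (frameZ n p)"
proof -
  define x where "x = qmul (qinv p) u"
  define y where "y = qmul (qinv p) w"
  have "Re (fst x) = 0"
    using u by (simp add: x_def Re_fst_qmul_qinv)
  then show ?thesis
    unfolding frame_eq_left_field hmet_left_field[OF p] hmet_at_identity[of l m n p u w]
      x_def[symmetric] y_def[symmetric]
    using assms(3-5)
    by (cases x, cases y) (simp add: hmet_def qmul_def ip_def frameX_id_def frameY_id_def
        frameZ_id_def power2_eq_square field_simps)
qed

lemma levi_civita_tangent_field:
  "levi_civita l m n nabla \<Longrightarrow> tangent_field A \<Longrightarrow> tangent_field B \<Longrightarrow>
    tangent_field (nabla A B)"
  unfolding levi_civita_def by blast

lemma levi_civita_torsion_free:
  assumes "levi_civita l m n nabla" and "tangent_field A" and "tangent_field B" and "p \<in> S3"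
  shows "nabla A B p - nabla B A p = bracket A B p"
  using assms smooth_map_const unfolding levi_civita_def by blast

lemma levi_civita_metric_compatible:
  assumes "levi_civita l m n nabla"
    and "tangent_field A" and "tangent_field B" and "tangent_field C" and "p \<in> S3"
  shows "dir A (\<lambda>q. hmet l m n q (B q) (C q)) p =
           hmet l m n p (nabla A B p) (C p) + hmet l m n p (B p) (nabla A C p)"
  using assms smooth_map_const unfolding levi_civita_def by blast

lemma koszul_formula:
  assumes lc: "levi_civita l m n nabla" and A: "tangent_field A" and B: "tangent_field B"
    and C: "tangent_field C" and p: "p \<in> S3"
  shows "2 * hmet l m n p (nabla A B p) (C p) =
     dir A (\<lambda>q. hmet l m n q (B q) (C q)) p + dir B (\<lambda>q. hmet l m n q (C q) (A q)) p
     - dir C (\<lambda>q. hmet l m n q (A q) (B q)) p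
     + hmet l m n p (bracket A B p) (C p) - hmet l m n p (bracket B C p) (A p)
     + hmet l m n p (bracket C A p) (B p)"
proof -
  note torsion = levi_civita_torsion_free[OF lc _ _ p]
  note compat = levi_civita_metric_compatible[OF lc A B C p]
    levi_civita_metric_compatible[OF lc B C A p] levi_civita_metric_compatible[OF lc C A B p]
  show ?thesis
    unfolding torsion[OF A B, symmetric] torsion[OF B C, symmetric]
      torsion[OF C A, symmetric] hmet_diff_left
    using compat hmet_sym[of l m n p "B p" "nabla A C p"]
      hmet_sym[of l m n p "C p" "nabla B A p"] hmet_sym[of l m n p "A p" "nabla C B p"]
    by linarith
qed

lemma dir_left_field_eq_0:
  assumes "tangent_field W" and "\<And>x. V differentiable (at x)" and "a \<in> su2" and "p \<in> S3"
    and "\<And>q. q \<in> S3 \<Longrightarrow> hmet l m n q (W q) (V q) = c"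
  shows "dir (left_field a) (\<lambda>q. hmet l m n q (W q) (V q)) p = 0"
proof -
  have "W differentiable (at p)"
    using assms(1) unfolding tangent_field_def smooth_map_def by blast
  then have "(\<lambda>q. hmet l m n q (W q) (V q)) differentiable (at p)"
    using assms(2) by (rule hmet_differentiable)
  moreover have "inner (left_field a p) p = 0"
    using assms(3) by (simp add: ip_left_field su2_def flip: ip_eq_inner)
  ultimately show ?thesis
    unfolding dir_def using assms(4,5) S3_eq_sphere
    by (blast intro: frechet_derivative_sphere_tangent)
qed

definition koszul_form :: "real \<Rightarrow> real \<Rightarrow> real \<Rightarrow> C2 \<Rightarrow> C2 \<Rightarrow> C2 \<Rightarrow> real" where
  "koszul_form l m n a b c =
     (hmet l m n (1, 0) (lie_bracket a b) c - hmet l m n (1, 0) (lie_bracket b c) a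
      + hmet l m n (1, 0) (lie_bracket c a) b) / 2"

lemma hmet_nabla_left_field:
  assumes lc: "levi_civita l m n nabla" and "a \<in> su2" "b \<in> su2" "c \<in> su2" and p: "p \<in> S3"
  shows "hmet l m n p (nabla (left_field a) (left_field b) p) (left_field c p) =
    koszul_form l m n a b c"
proof -
  have inv: "hmet l m n q (left_field x q) (left_field y q) = hmet l m n (1, 0) x y"
    if "q \<in> S3" for q x y
    using that by (simp add: left_field_def hmet_left_invariant)
  have const: "dir (left_field x) (\<lambda>q. hmet l m n q (left_field y q) (left_field z q)) p = 0"
    if "x \<in> su2" "y \<in> su2" for x y z
    using that inv
    by (intro dir_left_field_eq_0[where c = "hmet l m n (1, 0) y z"] tangent_field_left_field p
        bounded_linear_imp_differentiable bounded_linear_left_field)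
  show ?thesis
    using koszul_formula[OF lc tangent_field_left_field[OF assms(2)]
        tangent_field_left_field[OF assms(3)] tangent_field_left_field[OF assms(4)] p]
      const assms(2-4)
    by (simp add: bracket_left_field inv p koszul_form_def)
qed

(* h(nabla_{L_a} L_b, nabla_{L_c} L_d), expanded in the orthonormal frame *)
definition nabla_inner :: "real \<Rightarrow> real \<Rightarrow> real \<Rightarrow> C2 \<Rightarrow> C2 \<Rightarrow> C2 \<Rightarrow> C2 \<Rightarrow> real" where
  "nabla_inner l m n a b c d =
     - koszul_form l m n a b (frameX_id l) * koszul_form l m n c d (frameX_id l)
     + koszul_form l m n a b (frameY_id m) * koszul_form l m n c d (frameY_id m)
     + koszul_form l m n a b (frameZ_id n) * koszul_form l m n c d (frameZ_id n)"

(* The axioms constrain nabla only on S3, so nabla_{L_b} L_c cannot be replaced by a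
   left-invariant field inside nabla_{L_a}; metric compatibility moves nabla_{L_a} onto L_d. *)
lemma hmet_nabla_nabla_left_field:
  assumes lc: "levi_civita l m n nabla" and a: "a \<in> su2" and b: "b \<in> su2" and c: "c \<in> su2"
    and d: "d \<in> su2" and p: "p \<in> S3" and "l > 0" "m > 0" "n > 0"
  shows "hmet l m n p (nabla (left_field a) (nabla (left_field b) (left_field c)) p) (left_field d p)
    = - nabla_inner l m n b c a d"
proof -
  note L = tangent_field_left_field
  define W where "W = nabla (left_field b) (left_field c)"
  have W: "tangent_field W"
    unfolding W_def using lc L[OF b] L[OF c] by (rule levi_civita_tangent_field)
  have "dir (left_field a) (\<lambda>q. hmet l m n q (W q) (left_field d q)) p = 0"
    using W a p hmet_nabla_left_field[OF lc b c d] unfolding W_def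
    by (intro dir_left_field_eq_0 bounded_linear_imp_differentiable bounded_linear_left_field)
  then have "hmet l m n p (nabla (left_field a) W p) (left_field d p)
      = - hmet l m n p (W p) (nabla (left_field a) (left_field d) p)"
    using levi_civita_metric_compatible[OF lc L[OF a] W L[OF d] p] by simp
  moreover let ?N = "nabla (left_field a) (left_field d) p"
  have "ip (W p) p = 0"
    using W p by (simp add: tangent_field_def)
  then have "hmet l m n p (W p) ?N
      = - hmet l m n p (W p) (frameX l p) * hmet l m n p ?N (frameX l p)
        + hmet l m n p (W p) (frameY m p) * hmet l m n p ?N (frameY m p)
        + hmet l m n p (W p) (frameZ n p) * hmet l m n p ?N (frameZ n p)"
    by (rule hmet_frame_expansion[OF p _ assms(7-9)])
  also have "\<dots> = nabla_inner l m n b c a d"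
    by (simp add: W_def frame_eq_left_field hmet_nabla_left_field[OF lc] a b c d p
        frame_id_in_su2 nabla_inner_def)
  ultimately show ?thesis
    unfolding W_def by simp
qed

definition lie_curvature :: "real \<Rightarrow> real \<Rightarrow> real \<Rightarrow> C2 \<Rightarrow> C2 \<Rightarrow> C2 \<Rightarrow> C2 \<Rightarrow> real" where
  "lie_curvature l m n a b c d =
     nabla_inner l m n a c b d - nabla_inner l m n b c a d - koszul_form l m n (lie_bracket a b) c d"

lemma hmet_curv_left_field:
  assumes lc: "levi_civita l m n nabla" and "a \<in> su2" "b \<in> su2" "c \<in> su2" "d \<in> su2"
    and "p \<in> S3" and "l > 0" "m > 0" "n > 0"
  shows "hmet l m n p (curv nabla (left_field a) (left_field b) (left_field c) p) (left_field d p)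
    = lie_curvature l m n a b c d"
  using assms lie_bracket_in_su2
  by (simp add: curv_def hmet_diff_left hmet_nabla_nabla_left_field bracket_left_field
      hmet_nabla_left_field lie_curvature_def)

lemma lie_curvature_frame_id:
  assumes "l > 0" "m > 0" "n > 0"
  shows "lie_curvature l m n (frameX_id l) (frameY_id m) (frameY_id m) (frameX_id l)
      = ((l^2 + m^2 - n^2)^2 + 4 * n^2 * (m^2 - n^2)) / (l * m * n)^2" (is ?XY)
    and "lie_curvature l m n (frameX_id l) (frameZ_id n) (frameZ_id n) (frameX_id l)
      = ((l^2 - m^2 + n^2)^2 - 4 * m^2 * (m^2 - n^2)) / (l * m * n)^2" (is ?XZ)
    and "lie_curvature l m n (frameY_id m) (frameZ_id n) (frameZ_id n) (frameY_id m)
      = ((l^2 + m^2 + n^2)^2 + 2 * (l^4 - m^4 - n^4)) / (l * m * n)^2" (is ?YZ)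
proof -
  have "l \<noteq> 0" "m \<noteq> 0" "n \<noteq> 0"
    using assms by simp_all
  note brackets = lie_bracket_frame_id[OF this]
  show "?XY" "?XZ" "?YZ"
    using assms
    by (simp_all add: lie_curvature_def nabla_inner_def koszul_form_def brackets
        lie_bracket_scaleR_left lie_bracket_scaleR_right lie_bracket_minus_left
        lie_bracket_minus_right lie_bracket_self frame_id_orthonormal
        hmet_scaleR_left hmet_scaleR_right hmet_minus_left hmet_minus_right hmet_zero_left
        hmet_sym[of l m n "(1, 0)" "frameY_id m" "frameX_id l"]
        hmet_sym[of l m n "(1, 0)" "frameZ_id n" "frameY_id m"]
        hmet_sym[of l m n "(1, 0)" "frameX_id l" "frameZ_id n"])
      (simp_all add: field_simps power2_eq_square power4_eq_xxxx)
qed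

theorem mainTheorem4:
  fixes l m n :: real
    and nabla :: "(C2 \<Rightarrow> C2) \<Rightarrow> (C2 \<Rightarrow> C2) \<Rightarrow> C2 \<Rightarrow> C2"
    and p :: C2
  assumes "l > 0" and "m > 0" and "n > 0"
    and "levi_civita l m n nabla"
    and "p \<in> S3"
  shows "(hmet l m n p (curv nabla (frameX l) (frameY m) (frameY m) p) (frameX l p)
           = ((l^2 + m^2 - n^2)^2 + 4 * n^2 * (m^2 - n^2)) / (l * m * n)^2 \<and>
         hmet l m n p (curv nabla (frameX l) (frameZ n) (frameZ n) p) (frameX l p)
           = ((l^2 - m^2 + n^2)^2 - 4 * m^2 * (m^2 - n^2)) / (l * m * n)^2 \<and>
         hmet l m n p (curv nabla (frameY m) (frameZ n) (frameZ n) p) (frameY m p)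
           = ((l^2 + m^2 + n^2)^2 + 2 * (l^4 - m^4 - n^4)) / (l * m * n)^2)"
  unfolding frame_eq_left_field
  using hmet_curv_left_field[OF assms(4) _ _ _ _ assms(5) assms(1-3)] frame_id_in_su2
    lie_curvature_frame_id[OF assms(1-3)]
  by simp

end
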